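(* Assume $\xi_v\ge0$ for all $v$, $\pi_v>0$ for all $v\in\mathcal V$, and that the numbers $\{M_i\xi_i\}_{i\in\mathcal V}$ are not all equal. Then for all $\alpha,c\in\mathbb R$, the point $$\boldsymbol\alpha^\star=\alpha\mathbf 1,\qquad \boldsymbol\beta^\star=c\,\mathbf 1-e^{-\alpha}\,\boldsymbol M\circ\boldsymbol\xi$$ is a stationary point of the gradient flow $(\dot{\boldsymbol\alpha},\dot{\boldsymbol\beta})=-\nabla_{\boldsymbol\alpha,\boldsymbol\beta}\mathrm{loss}(\boldsymbol\alpha,\boldsymbol\beta)$, and every such point is a global minimizer of $\mathrm{loss}$.
   Context: Let $\mathcal V=\{1,\dots,V\}$ with trigger set $\mathcal T\subseteq\mathcal V$; $\mathbf P=(p_{vk})$ row-stochastic; weights $\pi_v$ and $\tilde\pi_v=\pi_v\mathbf 1\{v\notin\mathcal T\}$. Fix nonnegative integers $M_k$ with $M=\sum_kM_k>0$, reals $\xi_k\ge0$, and write $\boldsymbol M=(M_1,\dots,M_V)$, $\boldsymbol\xi=(\xi_1,\dots,\xi_V)$, $\circ$ for the entrywise product, $\mathbf 1$ for the all-ones vector. For $\boldsymbol\alpha,\boldsymbol\beta\in\mathbb R^V$, $$l_{vi}=\frac{p_{vi}\exp\!\big(\frac{M_i\xi_i+e^{\alpha_v}\beta_i}{e^{\alpha_v}+M}\big)}{\sum_{k} p_{vk}\exp\!\big(\frac{M_k\xi_k+e^{\alpha_v}\beta_k}{e^{\alpha_v}+M}\big)},$$ $\mathrm{loss}_v(\alpha_v,\boldsymbol\beta)=\sum_k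 p_{vk}\log(p_{vk}/l_{vk})$ (with $0\log 0=0$), $\mathrm{loss}(\boldsymbol\alpha,\boldsymbol\beta)=\sum_{v}\tilde\pi_v\mathrm{loss}_v(\alpha_v,\boldsymbol\beta)$. *)

theory Defs
  imports "HOL-Analysis.Analysis"
begin

text \<open>Vertex set \<V> is the finite type 'n; vectors in R^V are real^'n.
  P v k = p_vk, Mv k = M_k (natural numbers), xi k = xi_k.\<close>

definition Mtot :: "('n::finite \<Rightarrow> nat) \<Rightarrow> real" where
  "Mtot Mv = real (\<Sum>k\<in>UNIV. Mv k)"

definition expo :: "('n::finite \<Rightarrow> nat) \<Rightarrow> ('n \<Rightarrow> real) \<Rightarrow> real \<Rightarrow> real^'n \<Rightarrow> 'n \<Rightarrow> real" where
  "expo Mv xi a b i = exp ((real (Mv i) * xi i + exp a * (b $ i)) / (exp a + Mtot Mv))"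

definition lval :: "('n::finite \<Rightarrow> 'n \<Rightarrow> real) \<Rightarrow> ('n \<Rightarrow> nat) \<Rightarrow> ('n \<Rightarrow> real)
    \<Rightarrow> real \<Rightarrow> real^'n \<Rightarrow> 'n \<Rightarrow> 'n \<Rightarrow> real" where
  "lval P Mv xi a b v i =
     P v i * expo Mv xi a b i / (\<Sum>k\<in>UNIV. P v k * expo Mv xi a b k)"

definition loss_v :: "('n::finite \<Rightarrow> 'n \<Rightarrow> real) \<Rightarrow> ('n \<Rightarrow> nat) \<Rightarrow> ('n \<Rightarrow> real)
    \<Rightarrow> 'n \<Rightarrow> real \<Rightarrow> real^'n \<Rightarrow> real" where
  "loss_v P Mv xi v a b =
     (\<Sum>k\<in>UNIV. if P v k = 0 then 0 else P v k * ln (P v k / lval P Mv xi a b v k))"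

definition loss :: "'n set \<Rightarrow> ('n::finite \<Rightarrow> real) \<Rightarrow> ('n \<Rightarrow> 'n \<Rightarrow> real) \<Rightarrow> ('n \<Rightarrow> nat)
    \<Rightarrow> ('n \<Rightarrow> real) \<Rightarrow> real^'n \<Rightarrow> real^'n \<Rightarrow> real" where
  "loss T w P Mv xi al b =
     (\<Sum>v\<in>UNIV. (if v \<in> T then 0 else w v) * loss_v P Mv xi v (al $ v) b)"

end

theory Submission
  imports Defs
begin

text \<open>The loss of row v is the log-partition function ln (\<Sum>k p_vk e^{A_k}) minus the
  p_v-mean of the exponents A_k; by Jensen's inequality for exp it is nonnegative, and it
  vanishes as soon as all exponents A_k coincide. At the given point every exponent equals
  e^\<alpha> c / (e^\<alpha> + M), so the loss attains its global minimum 0 there. Being differentiable,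
  the loss then has vanishing derivative at that point by Fermat's rule.\<close>

lemma exp_weighted_mean_le:
  fixes p x :: "'a \<Rightarrow> real"
  assumes "finite A" "\<And>k. k \<in> A \<Longrightarrow> p k \<ge> 0" "(\<Sum>k\<in>A. p k) = 1"
  shows "exp (\<Sum>k\<in>A. p k * x k) \<le> (\<Sum>k\<in>A. p k * exp (x k))"
proof -
  have "A \<noteq> {}" using assms(3) by auto
  from convex_on_sum[OF assms(1) this exp_convex assms(3,2)]
  show ?thesis by simp
qed

lemma weighted_exp_sum_pos:
  fixes p x :: "'a \<Rightarrow> real"
  assumes "finite A" "\<And>k. k \<in> A \<Longrightarrow> p k \<ge> 0" "(\<Sum>k\<in>A. p k) = 1"
  shows "(\<Sum>k\<in>A. p k * exp (x k)) > 0"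
  using exp_weighted_mean_le[OF assms] exp_gt_zero less_le_trans by blast

lemma weighted_mean_le_ln_weighted_exp:
  fixes p x :: "'a \<Rightarrow> real"
  assumes "finite A" "\<And>k. k \<in> A \<Longrightarrow> p k \<ge> 0" "(\<Sum>k\<in>A. p k) = 1"
  shows "(\<Sum>k\<in>A. p k * x k) \<le> ln (\<Sum>k\<in>A. p k * exp (x k))"
  using exp_weighted_mean_le[OF assms] weighted_exp_sum_pos[OF assms] by (simp add: ln_ge_iff)

lemma differentiable_exp_comp:
  "f differentiable (at x within S) \<Longrightarrow> (\<lambda>z. exp (f z :: real)) differentiable (at x within S)"
  unfolding differentiable_def using has_derivative_exp by blast

lemma differentiable_ln_comp:
  "f differentiable (at x within S) \<Longrightarrow> f x > (0::real) \<Longrightarrow>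
    (\<lambda>z. ln (f z)) differentiable (at x within S)"
  unfolding differentiable_def using has_derivative_ln by blast

definition expo_arg :: "('n::finite \<Rightarrow> nat) \<Rightarrow> ('n \<Rightarrow> real) \<Rightarrow> real \<Rightarrow> real^'n \<Rightarrow> 'n \<Rightarrow> real" where
  "expo_arg Mv xi a b k = (real (Mv k) * xi k + exp a * (b $ k)) / (exp a + Mtot Mv)"

lemma expo_eq_exp_expo_arg: "expo Mv xi a b k = exp (expo_arg Mv xi a b k)"
  unfolding expo_def expo_arg_def by simp

lemma Mtot_nonneg: "Mtot Mv \<ge> 0"
  unfolding Mtot_def by (simp add: sum_nonneg)

lemma loss_v_eq_log_sum_exp:
  fixes P :: "'n::finite \<Rightarrow> 'n \<Rightarrow> real"
  assumes P_nonneg: "\<And>k. P v k \<ge> 0" and P_row: "(\<Sum>k\<in>UNIV. P v k) = 1"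
  shows "loss_v P Mv xi v a b = ln (\<Sum>k\<in>UNIV. P v k * exp (expo_arg Mv xi a b k))
            - (\<Sum>k\<in>UNIV. P v k * expo_arg Mv xi a b k)"
proof -
  define S where "S = (\<Sum>k\<in>UNIV. P v k * exp (expo_arg Mv xi a b k))"
  have S_pos: "S > 0"
    unfolding S_def by (rule weighted_exp_sum_pos) (use assms in auto)
  have summand: "P v k * ln (P v k / lval P Mv xi a b v k) = P v k * (ln S - expo_arg Mv xi a b k)"
    if "P v k \<noteq> 0" for k
  proof -
    have "P v k / lval P Mv xi a b v k = S / exp (expo_arg Mv xi a b k)"
      unfolding lval_def expo_eq_exp_expo_arg S_def[symmetric] using that S_pos by simp
    then show ?thesis using S_pos by (simp add: ln_div)
  qed
  have "loss_v P Mv xi v a b = (\<Sum>k\<in>UNIV. P v k * (ln S - expo_arg Mv xi a b k))"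
    unfolding loss_v_def by (rule sum.cong[OF refl]) (simp add: summand)
  also have "\<dots> = ln S * (\<Sum>k\<in>UNIV. P v k) - (\<Sum>k\<in>UNIV. P v k * expo_arg Mv xi a b k)"
    by (simp add: algebra_simps sum_subtractf sum_distrib_left sum_distrib_right)
  finally show ?thesis using P_row S_def by simp
qed

lemma loss_v_nonneg:
  fixes P :: "'n::finite \<Rightarrow> 'n \<Rightarrow> real"
  assumes "\<And>k. P v k \<ge> 0" "(\<Sum>k\<in>UNIV. P v k) = 1"
  shows "loss_v P Mv xi v a b \<ge> 0"
  unfolding loss_v_eq_log_sum_exp[where P=P and v=v, OF assms]
  using weighted_mean_le_ln_weighted_exp[of UNIV "P v"] assms by simp

lemma loss_v_eq_0_if_expo_arg_const:
  fixes P :: "'n::finite \<Rightarrow> 'n \<Rightarrow> real"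
  assumes "\<And>k. P v k \<ge> 0" "(\<Sum>k\<in>UNIV. P v k) = 1"
    and const: "\<And>k. expo_arg Mv xi a b k = K"
  shows "loss_v P Mv xi v a b = 0"
proof -
  have "loss_v P Mv xi v a b = ln (exp K * (\<Sum>k\<in>UNIV. P v k)) - K * (\<Sum>k\<in>UNIV. P v k)"
    unfolding loss_v_eq_log_sum_exp[where P=P and v=v, OF assms(1,2)] const
    by (simp add: sum_distrib_left mult.commute)
  then show ?thesis using assms(2) by simp
qed

lemma loss_nonneg:
  assumes "\<And>v k. P v k \<ge> 0" "\<And>v. (\<Sum>k\<in>UNIV. P v k) = 1" "\<And>v. w v \<ge> 0"
  shows "loss T w P Mv xi al b \<ge> 0"
  unfolding loss_def using assms
  by (intro sum_nonneg mult_nonneg_nonneg) (auto intro: loss_v_nonneg)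

lemma expo_arg_at_stationary_point:
  "expo_arg Mv xi a (\<chi> i. c - exp (- a) * (real (Mv i) * xi i)) k = exp a * c / (exp a + Mtot Mv)"
  unfolding expo_arg_def by (simp add: algebra_simps exp_minus)

lemma component_differentiable:
  "(\<lambda>z::(real^'m) \<times> 'b::real_normed_vector. fst z $ i) differentiable (at x)"
  "(\<lambda>z::'a::real_normed_vector \<times> (real^'m). snd z $ i) differentiable (at y)"
  by (intro bounded_linear_imp_differentiable
      bounded_linear_compose[OF bounded_linear_vec_nth bounded_linear_fst, unfolded o_def]
      bounded_linear_compose[OF bounded_linear_vec_nth bounded_linear_snd, unfolded o_def])+

lemma expo_arg_differentiable:
  fixes v :: "'n::finite"
  shows "(\<lambda>z. expo_arg Mv xi (fst z $ v) (snd z) k) differentiable (at x)"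
proof -
  have "exp t + Mtot Mv \<noteq> 0" for t
    using Mtot_nonneg[of Mv] by (metis add_pos_nonneg exp_gt_zero less_irrefl)
  then show ?thesis
    unfolding expo_arg_def
    by (intro differentiable_divide differentiable_add differentiable_mult differentiable_const
        differentiable_exp_comp component_differentiable) auto
qed

lemma loss_differentiable:
  fixes P :: "'n::finite \<Rightarrow> 'n \<Rightarrow> real"
  assumes P_nonneg: "\<And>v k. P v k \<ge> 0" and P_rows: "\<And>v. (\<Sum>k\<in>UNIV. P v k) = 1"
  shows "(\<lambda>z. loss T w P Mv xi (fst z) (snd z)) differentiable (at x)"
proof -
  let ?A = "\<lambda>z v k. expo_arg Mv xi (fst z $ v) (snd z) k"
  have sum_pos: "(\<Sum>k\<in>UNIV. P v k * exp (?A z v k)) > 0" for z v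
    by (rule weighted_exp_sum_pos) (use assms in auto)
  have "(\<lambda>z. ln (\<Sum>k\<in>UNIV. P v k * exp (?A z v k))) differentiable (at x)" for v
    using sum_pos
    by (intro differentiable_ln_comp differentiable_sum differentiable_mult differentiable_const
        differentiable_exp_comp expo_arg_differentiable ballI finite)
  then show ?thesis
    unfolding loss_def loss_v_eq_log_sum_exp[OF P_nonneg P_rows]
    by (intro differentiable_sum differentiable_mult differentiable_const differentiable_diff
        expo_arg_differentiable ballI finite)
qed

theorem theorem2:
  fixes T :: "'n::finite set"
    and w :: "'n \<Rightarrow> real"
    and P :: "'n \<Rightarrow> 'n \<Rightarrow> real"
    and Mv :: "'n \<Rightarrow> nat"
    and xi :: "'n \<Rightarrow> real"
    and a c :: real
  assumes P_nonneg: "\<And>v k. P v k \<ge> 0"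
    and P_rows: "\<And>v. (\<Sum>k\<in>UNIV. P v k) = 1"
    and M_pos: "(\<Sum>k\<in>UNIV. Mv k) > 0"
    and xi_nonneg: "\<And>v. xi v \<ge> 0"
    and pi_pos: "\<And>v. w v > 0"
    and not_all_equal: "\<not> (\<forall>i j. real (Mv i) * xi i = real (Mv j) * xi j)"
  shows "((\<lambda>z. loss T w P Mv xi (fst z) (snd z)) has_derivative (\<lambda>_. 0))
            (at ((\<chi> v. a), (\<chi> i. c - exp (- a) * (real (Mv i) * xi i))))
         \<and> (\<forall>al b. loss T w P Mv xi (\<chi> v. a) (\<chi> i. c - exp (- a) * (real (Mv i) * xi i))
                    \<le> loss T w P Mv xi al b)"
proof -
  define b0 :: "real^'n" where "b0 = (\<chi> i. c - exp (- a) * (real (Mv i) * xi i))"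
  define f where "f = (\<lambda>z. loss T w P Mv xi (fst z) (snd z))"
  have "loss T w P Mv xi (\<chi> v. a) b0 = 0"
    unfolding loss_def b0_def
    using loss_v_eq_0_if_expo_arg_const[OF P_nonneg P_rows expo_arg_at_stationary_point] by simp
  moreover have "w v \<ge> 0" for v
    using pi_pos[of v] by simp
  ultimately have min: "\<forall>al b. f (\<chi> v. a, b0) \<le> f (al, b)"
    unfolding f_def using loss_nonneg[OF P_nonneg P_rows] by simp
  obtain D where D: "(f has_derivative D) (at (\<chi> v. a, b0))"
    using loss_differentiable[of P, OF P_nonneg P_rows] unfolding f_def differentiable_def by blast
  have "D = (\<lambda>_. 0)"
    by (rule differential_zero_maxmin[of "(\<chi> v. a, b0)" UNIV f D]) (use D min in auto)
  with D min show ?thesis unfolding f_def b0_def by simp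
qed

end
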